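(* Consider binary-tree pivotal sampling on a fixed full binary tree $T$ under the standing assumptions. Define a random assignment of values $\eta_v\in\{0,1\}$ to all non-root nodes of $T$ top-down as follows: for the children $r_1,r_2$ of the root, set $(\eta_{r_1},\eta_{r_2})=(1,0)$ with probability $\pi_{r_1}$ and $(0,1)$ otherwise; then, proceeding level by level, for each internal node $v$ already assigned, with children $v_1,v_2$, draw $(\eta_{v_1},\eta_{v_2})$ independently of everything else from the conditional law given $\xi_v=\eta_v$ described by: if $\pi_{v_1}+\pi_{v_2}>1$, $(1,1)$ when $\eta_v=1$, and when $\eta_v=0$, $(1,0)$ with probability $\frac{1-\pi_{v_2}}{2-\pi_{v_1}-\pi_{v_2}}$ and $(0,1)$ otherwise; if $\pi_{v_1}+\pi_{v_2}<1$, $(0,0)$ when $\eta_v=0$, and when $\eta_v=1$, $(1,0)$ with probability $\frac{\pi_{v_1}}{\pi_{v_1}+\pi_{v_2}}$ and $(0,1)$ otherwise. Then the vector $(\eta_\ell)_{\ell\text{ leaf}}$ has the same joint distribution as the vector $(\xi_\ell)_{\ell\text{ leaf}}$ of leaf inclusion indicators produced by binary-tree pivotal sampling.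
   Context: Binary-tree pivotal sampling: let $T$ be a full binary tree whose leaves are identified with an index set, and let $q_i\in[0,1]$ be leaf probabilities with integer sum. Each node can store an index together with a current probability; initially each leaf $i$ stores $i$ with probability $q_i$, and the output set $\mathcal S_{\rm out}$ is empty. Repeatedly choose two sibling nodes that both store indices, say $i$ with probability $q_i$ and $j$ with probability $q_j$, with parent $P$, and remove them. If $q_i+q_j\le1$: with probability $q_i/(q_i+q_j)$ store $i$ at $P$ with probability $q_i+q_j$ ($j$ is rejected), otherwise store $j$ at $P$ with probability $q_i+q_j$ ($i$ is rejected). If $q_i+q_j>1$: with probability $(1-q_i)/(2-q_i-q_j)$ put $j$ into $\mathcal S_{\rm out}$ and store $i$ at $P$ with probability $q_i+q_j-1$; otherwise put $i$ into $\mathcal S_{\rm out}$ and store $j$ at $P$ with probability $q_i+q_j-1$. When only the root stores an index, put it into $\mathcal S_{\rm out}$ iff its probability is $1$. Carried probabilities: $\pi_v=q_i$ for a leaf $v$ with index $i$; for an internal node $v$ with children $v_1,v_2$, $\pi_v=\pi_{v_1}+\pi_{v_2}$ if $\pi_{v_1}+\pi_{v_2}<1$ and $\pi_v=\pi_{v_1}+\pi_{v_2}-1$ if $\pi_{v_1}+\pi_{v_2}>1$. Node statuses: for a non-root node $v$, $\xi_v\in\{0,1\}$ is the indicator that the index stored at $v$ (for a leaf, its own index; for an internal node, the index promoted to $v$ by the comparison of its children) belongs to the final output $\mathcal S_{\rm out}$. Standing assumptions: all leaf probabilities lie in $(0,1)$; for every internal non-root node $v$ with children $v_1,v_2$, $\pi_{v_1}+\pi_{v_2}\ne1$;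 for the two children $r_1,r_2$ of the root, $\pi_{r_1}+\pi_{r_2}=1$. *)

theory Defs
  imports "HOL-Probability.Probability"
begin

datatype 'a btree = Lf 'a | Nd "'a btree" "'a btree"

fun leaves :: "'a btree \<Rightarrow> 'a list" where
  "leaves (Lf i) = [i]"
| "leaves (Nd l r) = leaves l @ leaves r"

fun subtrees :: "'a btree \<Rightarrow> 'a btree set" where
  "subtrees (Lf i) = {Lf i}"
| "subtrees (Nd l r) = insert (Nd l r) (subtrees l \<union> subtrees r)"

text \<open>Carried probabilities pi_v (the case of sum exactly 1 only occurs at the root).\<close>
fun carried :: "('a \<Rightarrow> real) \<Rightarrow> 'a btree \<Rightarrow> real" where
  "carried q (Lf i) = q i"
| "carried q (Nd l r) =
     (let s = carried q l + carried q r in if s \<le> 1 then s else s - 1)"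

text \<open>One pivotal duel of two sibling nodes storing (i, qi) and (j, qj):
  returns the index stored at the parent, its probability, and the set of
  indices put into the output.\<close>
definition duel :: "'a \<Rightarrow> real \<Rightarrow> 'a \<Rightarrow> real \<Rightarrow> ('a \<times> real \<times> 'a set) pmf" where
  "duel i qi j qj =
     (if qi + qj \<le> 1 then
        map_pmf (\<lambda>b. if b then (i, qi + qj, {}) else (j, qi + qj, {}))
          (bernoulli_pmf (qi / (qi + qj)))
      else
        map_pmf (\<lambda>b. if b then (i, qi + qj - 1, {j}) else (j, qi + qj - 1, {i}))
          (bernoulli_pmf ((1 - qi) / (2 - qi - qj))))"

text \<open>Pivotal sampling on a subtree: distribution of (index stored at its
  top node, probability stored there, indices put into the output so far).
  Disjoint subtrees are processed independently.\<close>
fun pivotal_sub :: "('a \<Rightarrow> real) \<Rightarrow> 'a btree \<Rightarrow> ('a \<times> real \<times> 'a set) pmf" where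
  "pivotal_sub q (Lf i) = return_pmf (i, q i, {})"
| "pivotal_sub q (Nd l r) =
     bind_pmf (pivotal_sub q l) (\<lambda>(i, qi, S1).
     bind_pmf (pivotal_sub q r) (\<lambda>(j, qj, S2).
     map_pmf (\<lambda>(k, qk, S3). (k, qk, S1 \<union> S2 \<union> S3)) (duel i qi j qj)))"

text \<open>The output set S_out of binary-tree pivotal sampling; leaf i has
  xi_i = 1 iff i is in this set.\<close>
definition pivotal_out :: "('a \<Rightarrow> real) \<Rightarrow> 'a btree \<Rightarrow> 'a set pmf" where
  "pivotal_out q T =
     map_pmf (\<lambda>(k, qk, S). if qk = 1 then insert k S else S) (pivotal_sub q T)"

text \<open>Top-down assignment of eta: given the value e of eta at the top node of
  a (non-root) subtree, the distribution of the set of leaves with eta = 1.\<close>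
fun eta_sub :: "('a \<Rightarrow> real) \<Rightarrow> bool \<Rightarrow> 'a btree \<Rightarrow> 'a set pmf" where
  "eta_sub q e (Lf i) = return_pmf (if e then {i} else {})"
| "eta_sub q e (Nd l r) =
     (let a = carried q l; b = carried q r;
          kids = (\<lambda>(e1, e2). bind_pmf (eta_sub q e1 l) (\<lambda>A.
                              map_pmf (\<lambda>B. A \<union> B) (eta_sub q e2 r)))
      in if a + b > 1 then
           (if e then kids (True, True)
            else bind_pmf (bernoulli_pmf ((1 - b) / (2 - a - b)))
                   (\<lambda>c. if c then kids (True, False) else kids (False, True)))
         else
           (if e then bind_pmf (bernoulli_pmf (a / (a + b)))
                   (\<lambda>c. if c then kids (True, False) else kids (False, True))
            else kids (False, False)))"

definition eta_leaves :: "('a \<Rightarrow> real) \<Rightarrow> 'a btree \<Rightarrow> 'a btree \<Rightarrow> 'a set pmf" where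
  "eta_leaves q r1 r2 =
     bind_pmf (bernoulli_pmf (carried q r1)) (\<lambda>c.
       bind_pmf (eta_sub q c r1) (\<lambda>A. map_pmf (\<lambda>B. A \<union> B) (eta_sub q (\<not> c) r2)))"

end

theory Submission
  imports Defs
begin

(* Read the state (k, qk, S) that pivotal sampling leaves on a subtree as a function of
   the eventual status e of the index k still stored at its top: the subtree contributes
   S, plus k if e holds.  Pushing the bottom-up sampler forward along this reading gives
   exactly the top-down law with top status e, by induction on the tree: in a duel with
   sum below 1 the winner inherits the parent's status and the loser is rejected, with
   sum above 1 the loser is output and the winner inherits the parent's status, and the
   duel's coin has the law prescribed for the children's statuses.  At the root the
   carried probability is 1, so the surviving index is output, which is the root step
   with status 1. *)

lemma bind_bernoulli_pmf_swap:
  assumes "0 \<le> p" "p \<le> 1"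
  shows "bind_pmf (bernoulli_pmf p) (\<lambda>c. if c then M else N)
       = bind_pmf (bernoulli_pmf (1 - p)) (\<lambda>c. if c then N else M)"
proof -
  have Not_bernoulli: "map_pmf Not (bernoulli_pmf p) = bernoulli_pmf (1 - p)"
  proof (rule pmf_eqI)
    fix c :: bool
    have "pmf (map_pmf Not (bernoulli_pmf p)) c = pmf (bernoulli_pmf p) (\<not> c)"
      using pmf_map_inj'[of Not "bernoulli_pmf p" "\<not> c"] by (simp add: inj_def)
    then show "pmf (map_pmf Not (bernoulli_pmf p)) c = pmf (bernoulli_pmf (1 - p)) c"
      using assms by (cases c) auto
  qed
  show ?thesis
    unfolding Not_bernoulli[symmetric] bind_map_pmf by (auto intro: bind_pmf_cong)
qed

lemma bind_pmf_map_pmf_commute: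
  "bind_pmf A (\<lambda>x. bind_pmf B (\<lambda>y. map_pmf (f x y) C))
   = bind_pmf C (\<lambda>c. bind_pmf A (\<lambda>x. map_pmf (\<lambda>y. f x y c) B))"
  unfolding map_pmf_def by (subst bind_commute_pmf) (rule bind_commute_pmf)

definition settle :: "bool \<Rightarrow> 'a \<times> real \<times> 'a set \<Rightarrow> 'a set" where
  "settle e x = (if e then insert (fst x) (snd (snd x)) else snd (snd x))"

definition merge_duel ::
  "('a \<times> real \<times> 'a set) pmf \<Rightarrow> real \<Rightarrow> ('a \<times> real \<times> 'a set) pmf \<Rightarrow> real
     \<Rightarrow> ('a \<times> real \<times> 'a set) pmf" where
  "merge_duel L a R b = bind_pmf L (\<lambda>x. bind_pmf R (\<lambda>y.
     map_pmf (\<lambda>(k, qk, S). (k, qk, snd (snd x) \<union> snd (snd y) \<union> S)) (duel (fst x) a (fst y) b)))"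

definition settle_pair ::
  "bool \<Rightarrow> bool \<Rightarrow> ('a \<times> real \<times> 'a set) pmf \<Rightarrow> ('a \<times> real \<times> 'a set) pmf \<Rightarrow> 'a set pmf" where
  "settle_pair e1 e2 L R = bind_pmf L (\<lambda>x. map_pmf (\<lambda>y. settle e1 x \<union> settle e2 y) R)"

lemma settle_merge_duel_le:
  assumes "a + b \<le> 1"
  shows "map_pmf (settle e) (merge_duel L a R b)
       = (if e then bind_pmf (bernoulli_pmf (a / (a + b)))
            (\<lambda>c. if c then settle_pair True False L R else settle_pair False True L R)
          else settle_pair False False L R)"
proof -
  have "map_pmf (settle e) (merge_duel L a R b) = bind_pmf L (\<lambda>x. bind_pmf R (\<lambda>y.
      map_pmf (\<lambda>c. if c then settle e x \<union> settle False y else settle False x \<union> settle e y)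
        (bernoulli_pmf (a / (a + b)))))"
    unfolding merge_duel_def duel_def if_P[OF assms] map_bind_pmf map_pmf_comp
    by (intro bind_pmf_cong map_pmf_cong refl) (auto simp: settle_def)
  also have "\<dots> = bind_pmf (bernoulli_pmf (a / (a + b)))
           (\<lambda>c. if c then settle_pair e False L R else settle_pair False e L R)"
    by (subst bind_pmf_map_pmf_commute, rule bind_pmf_cong[OF refl]) (simp add: settle_pair_def)
  also have "\<dots> = (if e then bind_pmf (bernoulli_pmf (a / (a + b)))
            (\<lambda>c. if c then settle_pair True False L R else settle_pair False True L R)
          else settle_pair False False L R)"
    by (cases e) (simp_all cong: if_cong)
  finally show ?thesis .
qed

lemma settle_merge_duel_gt:
  assumes "a + b > 1"
  shows "map_pmf (settle e) (merge_duel L a R b)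
       = (if e then settle_pair True True L R
          else bind_pmf (bernoulli_pmf ((1 - a) / (2 - a - b)))
            (\<lambda>c. if c then settle_pair False True L R else settle_pair True False L R))"
proof -
  have "\<not> a + b \<le> 1" using assms by simp
  then have "map_pmf (settle e) (merge_duel L a R b) = bind_pmf L (\<lambda>x. bind_pmf R (\<lambda>y.
      map_pmf (\<lambda>c. if c then settle e x \<union> settle True y else settle True x \<union> settle e y)
        (bernoulli_pmf ((1 - a) / (2 - a - b)))))"
    unfolding merge_duel_def duel_def if_not_P[OF \<open>\<not> a + b \<le> 1\<close>] map_bind_pmf map_pmf_comp
    by (intro bind_pmf_cong map_pmf_cong refl) (auto simp: settle_def)
  also have "\<dots> = bind_pmf (bernoulli_pmf ((1 - a) / (2 - a - b)))
           (\<lambda>c. if c then settle_pair e True L R else settle_pair True e L R)"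
    by (subst bind_pmf_map_pmf_commute, rule bind_pmf_cong[OF refl]) (simp add: settle_pair_def)
  also have "\<dots> = (if e then settle_pair True True L R
          else bind_pmf (bernoulli_pmf ((1 - a) / (2 - a - b)))
            (\<lambda>c. if c then settle_pair False True L R else settle_pair True False L R))"
    by (cases e) (simp_all cong: if_cong)
  finally show ?thesis .
qed

lemma settle_pair_eq_bind:
  assumes "\<And>e. map_pmf (settle e) L = A e" and "\<And>e. map_pmf (settle e) R = B e"
  shows "bind_pmf (A e1) (\<lambda>X. map_pmf (\<lambda>Y. X \<union> Y) (B e2)) = settle_pair e1 e2 L R"
  unfolding settle_pair_def assms[symmetric] by (simp add: bind_map_pmf map_pmf_comp)

lemma carried_in_open_unit:
  assumes "\<forall>i\<in>set (leaves v). 0 < q i \<and> q i < 1"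
    and "\<forall>v1 v2. Nd v1 v2 \<in> subtrees v \<longrightarrow> carried q v1 + carried q v2 \<noteq> 1"
  shows "0 < carried q v \<and> carried q v < 1"
  using assms
proof (induction v)
  case (Nd l r)
  then have "0 < carried q l \<and> carried q l < 1" "0 < carried q r \<and> carried q r < 1"
      and "carried q l + carried q r \<noteq> 1"
    by auto
  then show ?case by (auto simp: Let_def)
qed simp

lemma carried_pivotal_sub: "x \<in> set_pmf (pivotal_sub q v) \<Longrightarrow> fst (snd x) = carried q v"
  by (induction v arbitrary: x) (fastforce simp: duel_def Let_def split: if_splits prod.splits)+

lemma pivotal_sub_Nd_merge_duel:
  "pivotal_sub q (Nd l r)
     = merge_duel (pivotal_sub q l) (carried q l) (pivotal_sub q r) (carried q r)"
  unfolding merge_duel_def pivotal_sub.simps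
  by (intro bind_pmf_cong refl)
    (auto intro!: bind_pmf_cong split: prod.splits dest!: carried_pivotal_sub)

lemma map_settle_pivotal_sub_Nd:
  assumes settle_l: "\<And>e. map_pmf (settle e) (pivotal_sub q l) = eta_sub q e l"
    and settle_r: "\<And>e. map_pmf (settle e) (pivotal_sub q r) = eta_sub q e r"
    and "carried q l < 1" "carried q r < 1" "carried q l + carried q r \<noteq> 1"
  shows "map_pmf (settle e) (pivotal_sub q (Nd l r)) = eta_sub q e (Nd l r)"
proof -
  define a where "a = carried q l"
  define b where "b = carried q r"
  define L where "L = pivotal_sub q l"
  define R where "R = pivotal_sub q r"
  have kids: "\<And>e1 e2. bind_pmf (eta_sub q e1 l) (\<lambda>X. map_pmf (\<lambda>Y. X \<union> Y) (eta_sub q e2 r))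
                     = settle_pair e1 e2 L R"
    unfolding L_def R_def using settle_l settle_r by (rule settle_pair_eq_bind)
  have pivotal: "pivotal_sub q (Nd l r) = merge_duel L a R b"
    unfolding a_def b_def L_def R_def by (rule pivotal_sub_Nd_merge_duel)
  consider "a + b < 1" | "a + b > 1" using assms(5) by (fastforce simp: a_def b_def)
  then show ?thesis
  proof cases
    case 1
    then have "\<not> a + b > 1" by simp
    have "map_pmf (settle e) (pivotal_sub q (Nd l r))
        = (if e then bind_pmf (bernoulli_pmf (a / (a + b)))
            (\<lambda>c. if c then settle_pair True False L R else settle_pair False True L R)
          else settle_pair False False L R)"
      unfolding pivotal using 1 by (intro settle_merge_duel_le) simp
    also have "\<dots> = eta_sub q e (Nd l r)"
      unfolding eta_sub.simps Let_def a_def[symmetric] b_def[symmetric]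
        if_not_P[OF \<open>\<not> a + b > 1\<close>] case_prod_conv kids ..
    finally show ?thesis .
  next
    case 2
    \<comment> \<open>p is the probability that the left index survives the duel, i.e. that the right
      child is output; eta_sub draws the same coin through its complement.\<close>
    define p where "p = (1 - a) / (2 - a - b)"
    have p: "0 \<le> p" "p \<le> 1" "1 - p = (1 - b) / (2 - a - b)"
      using assms(3,4) 2 by (auto simp: p_def a_def b_def field_simps)
    have "map_pmf (settle e) (pivotal_sub q (Nd l r))
        = (if e then settle_pair True True L R
          else bind_pmf (bernoulli_pmf p)
            (\<lambda>c. if c then settle_pair False True L R else settle_pair True False L R))"
      unfolding pivotal p_def using 2 by (rule settle_merge_duel_gt)
    also have "\<dots> = eta_sub q e (Nd l r)"
      unfolding bind_bernoulli_pmf_swap[OF p(1,2)] p(3) eta_sub.simps Let_def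
        a_def[symmetric] b_def[symmetric] if_P[OF 2] case_prod_conv kids ..
    finally show ?thesis .
  qed
qed

lemma map_settle_pivotal_sub:
  assumes "\<forall>i\<in>set (leaves v). 0 < q i \<and> q i < 1"
    and "\<forall>v1 v2. Nd v1 v2 \<in> subtrees v \<longrightarrow> carried q v1 + carried q v2 \<noteq> 1"
  shows "map_pmf (settle e) (pivotal_sub q v) = eta_sub q e v"
  using assms
proof (induction v arbitrary: e)
  case (Lf i)
  show ?case by (simp add: settle_def)
next
  case (Nd l r)
  have "carried q l < 1" "carried q r < 1"
    using carried_in_open_unit[of l q] carried_in_open_unit[of r q] Nd.prems by auto
  moreover have "carried q l + carried q r \<noteq> 1" using Nd.prems by auto
  ultimately show ?case
    using Nd by (intro map_settle_pivotal_sub_Nd) auto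
qed

theorem propositionE12:
  fixes q :: "'a \<Rightarrow> real" and r1 r2 :: "'a btree"
  defines "T \<equiv> Nd r1 r2"
  assumes distinct_leaves: "distinct (leaves T)"
    and leaf_probs: "\<forall>i\<in>set (leaves T). 0 < q i \<and> q i < 1"
    and integer_sum: "\<exists>n::nat. (\<Sum>i\<in>set (leaves T). q i) = real n"
    and nonroot: "\<forall>v1 v2. Nd v1 v2 \<in> subtrees r1 \<union> subtrees r2 \<longrightarrow>
                      carried q v1 + carried q v2 \<noteq> 1"
    and root: "carried q r1 + carried q r2 = 1"
  shows "eta_leaves q r1 r2 = pivotal_out q T"
proof -
  define L where "L = pivotal_sub q r1"
  define R where "R = pivotal_sub q r2"
  have settle_L: "\<And>e. map_pmf (settle e) L = eta_sub q e r1"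
   and settle_R: "\<And>e. map_pmf (settle e) R = eta_sub q e r2"
    unfolding L_def R_def using leaf_probs nonroot
    by (auto simp: T_def intro!: map_settle_pivotal_sub)
  have "carried q T = 1" using root by (simp add: T_def)
  then have "pivotal_out q T = map_pmf (settle True) (pivotal_sub q T)"
    unfolding pivotal_out_def
    by (auto simp: settle_def intro!: map_pmf_cong dest!: carried_pivotal_sub)
  also have "\<dots> = map_pmf (settle True) (merge_duel L (carried q r1) R (carried q r2))"
    unfolding T_def L_def R_def pivotal_sub_Nd_merge_duel ..
  also have "\<dots> = bind_pmf (bernoulli_pmf (carried q r1))
      (\<lambda>c. if c then settle_pair True False L R else settle_pair False True L R)"
    using settle_merge_duel_le[of "carried q r1" "carried q r2" True L R] root by simp
  also have "\<dots> = eta_leaves q r1 r2"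
    unfolding eta_leaves_def settle_pair_eq_bind[OF settle_L settle_R]
    by (rule bind_pmf_cong[OF refl]) simp
  finally show ?thesis ..
qed

end
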